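(* In the reinforcement-learning network model described in the context, there exists an $(\mathcal{F}_n)$-adapted martingale increment process $(\eta_n)_{n\in\mathbb{N}}$ (i.e. $\eta_{n+1}$ is $\mathcal{F}_{n+1}$-measurable with $\mathbb{E}(\eta_{n+1}\mid\mathcal{F}_n)=0$) such that for all $n\in\mathbb{N}$ $$x_{n+1}-x_n=\frac{F(x_n)}{T_n}+\eta_{n+1}+\widetilde R_{n+1},$$ and, for all $n,k\in\mathbb{N}$, $$|\eta_{n+1}|\le\frac{2\sum_{i,j\in\mathbb{V}}a_{ij}}{T_n},\qquad\sum_{n\ge k}|\widetilde R_{n+1}|\le\frac{2\sum_{k,l\in\mathbb{V}}a_{kl}}{T_k},$$ where $|\cdot|$ is the $L^1$ norm on $\mathbb{R}^{\mathbb{V}\times\mathbb{V}}$.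
   Context: Let $G=(\mathbb{V},E)$ be a finite graph with adjacency $\sim$. Let $a_{ij}=a_{ji}\ge0$, $>0$ only if $i\sim j$. Let $(p_W)_{W\subseteq\mathbb{V}}$ be nonnegative with $\sum_Wp_W=1$; for $i\sim j$, $p_{ij}=\sum_{W:i,j\in W}p_W$; $p_{ij}=0$ if $i\not\sim j$. Assume some $a_{ij}p_{ij}>0$. Let $v^0_{ij}=v^0_{ji}\ge0$, $>0$ iff $i\sim j$. Process: $V^0_{ij}=v^0_{ij}$, $V^n_{ij}=0$ if $i\not\sim j$, $V^n_i=\sum_jV^n_{ij}$; at each time $n$ each vertex $i$ independently chooses a neighbour $j$ with probability $V^n_{ij}/V^n_i$; independently Nature picks $W_n$ with $\mathbb{P}(W_n=W)=p_W$, i.i.d.; if $i,j\in W_n$, $i\sim j$ and $i,j$ choose each other, then $V^{n+1}_{ij}=V^{n+1}_{ji}=V^n_{ij}+a_{ij}$, else unchanged; $\mathcal{F}_n$ is the natural filtration. Let $T_n=\sum_{i,j}V^n_{ij}$ (ordered pairs), $x^n_{ij}=V^n_{ij}/T_n$, $x_n=(x^n_{ij})$. For an array $x$ let $x_i=\sum_jx_{ij}$, $H(x)=\sum_{(i,j):x_{ij}>0}a_{ij}p_{ij}x_{ij}^2/(x_ix_j)$ and $F(x)_{ij}=x_{ij}\big(a_{ij}p_{ij}\frac{x_{ij}}{x_ix_j}-H(x)\big)$ ($F_{ij}=0$ if $x_{ij}=0$; $a_{ij}p_{ij}x_{ij}/(x_ix_j):=0$ if $a_{ij}p_{ij}=0$).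 Let $\Delta^{n+1}_{ij}=V^{n+1}_{ij}-V^n_{ij}$, $\Delta^{n+1}_T=T_{n+1}-T_n$ and $\widetilde R^{ij}_{n+1}=(\Delta^{n+1}_{ij}-x^n_{ij}\Delta^{n+1}_T)\big(\frac1{T_{n+1}}-\frac1{T_n}\big)$, $\widetilde R_{n+1}=(\widetilde R^{ij}_{n+1})_{i,j}$. *)

theory Defs
  imports "HOL-Probability.Probability"
begin

definition pedge :: "('v \<Rightarrow> 'v \<Rightarrow> bool) \<Rightarrow> ('v set \<Rightarrow> real) \<Rightarrow> 'v \<Rightarrow> 'v \<Rightarrow> real" where
  "pedge adj pW i j = (if adj i j then (\<Sum>W\<in>{W. i \<in> W \<and> j \<in> W}. pW W) else 0)"

definition rowsum :: "('v::finite \<Rightarrow> 'v \<Rightarrow> real) \<Rightarrow> 'v \<Rightarrow> real" where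
  "rowsum x i = (\<Sum>j\<in>UNIV. x i j)"

definition Hfun :: "('v::finite \<Rightarrow> 'v \<Rightarrow> real) \<Rightarrow> ('v \<Rightarrow> 'v \<Rightarrow> real) \<Rightarrow> ('v \<Rightarrow> 'v \<Rightarrow> real) \<Rightarrow> real" where
  "Hfun a p x = (\<Sum>(i,j)\<in>{(i,j). x i j > 0}.
      a i j * p i j * (x i j)^2 / (rowsum x i * rowsum x j))"

definition Ffun :: "('v::finite \<Rightarrow> 'v \<Rightarrow> real) \<Rightarrow> ('v \<Rightarrow> 'v \<Rightarrow> real) \<Rightarrow> ('v \<Rightarrow> 'v \<Rightarrow> real) \<Rightarrow> 'v \<Rightarrow> 'v \<Rightarrow> real" where
  "Ffun a p x i j = (if x i j = 0 then 0 else
      x i j * ((if a i j * p i j = 0 then 0 else a i j * p i j * x i j / (rowsum x i * rowsum x j))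
               - Hfun a p x))"

definition norm1 :: "('v::finite \<Rightarrow> 'v \<Rightarrow> real) \<Rightarrow> real" where
  "norm1 X = (\<Sum>i\<in>UNIV. \<Sum>j\<in>UNIV. \<bar>X i j\<bar>)"

definition total :: "('v::finite \<Rightarrow> 'v \<Rightarrow> real) \<Rightarrow> real" where
  "total V = (\<Sum>i\<in>UNIV. \<Sum>j\<in>UNIV. V i j)"

definition normalize :: "('v::finite \<Rightarrow> 'v \<Rightarrow> real) \<Rightarrow> 'v \<Rightarrow> 'v \<Rightarrow> real" where
  "normalize V i j = V i j / total V"

definition Rtilde :: "('v::finite \<Rightarrow> 'v \<Rightarrow> real) \<Rightarrow> ('v \<Rightarrow> 'v \<Rightarrow> real) \<Rightarrow> 'v \<Rightarrow> 'v \<Rightarrow> real" where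
  "Rtilde Vn Vn1 i j =
     ((Vn1 i j - Vn i j) - normalize Vn i j * (total Vn1 - total Vn)) *
     (1 / total Vn1 - 1 / total Vn)"

end

theory Submission
  imports Defs
begin

text \<open>
  Let E(n,k,l) be the event that k and l choose each other and both lie in W_n, so that
  \<Delta>V_kl = a_kl 1_E(n,k,l). The vertices choose independently given \<F>_n, hence
  P(E(n,k,l) | \<F>_n) = p_kl (V_kl / V_k) (V_lk / V_l). Exact algebra gives
  x_{n+1} - x_n = (\<Delta>V - x_n \<Delta>T) / T_n + R_{n+1}, and replacing every indicator by its conditional
  probability turns the first term into F(x_n) / T_n; the centred remainder is \<eta>_{n+1}.
  Since 0 \<le> \<Delta>V_kl \<le> a_kl, both T_n |\<eta>_{n+1}| and |R_{n+1}| / (1/T_n - 1/T_{n+1}) are at most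
  2 \<Sum> a, and the second bound telescopes.
\<close>

lemma total_diff: "total U' - total U = (\<Sum>i\<in>UNIV. \<Sum>j\<in>UNIV. U' i j - U i j)"
  unfolding total_def by (simp add: sum_subtractf)

lemma total_normalize: "total U \<noteq> 0 \<Longrightarrow> total (normalize U) = 1"
  unfolding total_def normalize_def by (simp add: sum_divide_distrib[symmetric])

lemma rowsum_normalize: "rowsum (normalize U) k = rowsum U k / total U"
  unfolding rowsum_def normalize_def by (simp add: sum_divide_distrib)

lemma le_total:
  assumes "\<And>i j. U i j \<ge> 0" shows "U i j \<le> total U"
  unfolding total_def using assms
  by (intro order_trans[OF member_le_sum member_le_sum[of i]] sum_nonneg) auto

lemma normalize_increment:
  assumes "total U \<noteq> 0" "total U' \<noteq> 0"
  shows "normalize U' i j - normalize U i j =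
     (U' i j - U i j - normalize U i j * (total U' - total U)) / total U + Rtilde U U' i j"
  using assms unfolding Rtilde_def normalize_def by (simp add: field_simps)

lemma norm1_nonneg: "0 \<le> norm1 X"
  unfolding norm1_def by (simp add: sum_nonneg)

lemma norm1_Rtilde_le:
  fixes U U' a :: "'v::finite \<Rightarrow> 'v \<Rightarrow> real"
  assumes T: "total U > 0" and U_nonneg: "\<And>i j. U i j \<ge> 0"
    and incr_nonneg: "\<And>i j. U i j \<le> U' i j" and incr_le: "\<And>i j. U' i j - U i j \<le> a i j"
  shows "norm1 (Rtilde U U') \<le> 2 * total a * (1 / total U - 1 / total U')"
proof -
  define DT where "DT = total U' - total U"
  have DT_nonneg: "DT \<ge> 0"
    unfolding DT_def total_diff using incr_nonneg by (auto intro!: sum_nonneg)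
  have DT_le: "DT \<le> total a"
    unfolding DT_def total_diff total_def[of a] using incr_le by (auto intro!: sum_mono)
  have factor_nonneg: "1 / total U - 1 / total U' \<ge> 0"
    using T DT_nonneg unfolding DT_def by (simp add: frac_le)
  have "norm1 (Rtilde U U') = (\<Sum>i\<in>UNIV. \<Sum>j\<in>UNIV.
      \<bar>U' i j - U i j - normalize U i j * DT\<bar>) * (1 / total U - 1 / total U')"
    using factor_nonneg unfolding norm1_def Rtilde_def DT_def
    by (simp add: abs_mult sum_distrib_right)
  also have "\<dots> \<le> (\<Sum>i\<in>UNIV. \<Sum>j\<in>UNIV. (U' i j - U i j) + normalize U i j * DT)
      * (1 / total U - 1 / total U')"
  proof (intro mult_right_mono factor_nonneg sum_mono)
    fix i j
    have "normalize U i j \<ge> 0" unfolding normalize_def using U_nonneg T by simp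
    then show "\<bar>U' i j - U i j - normalize U i j * DT\<bar> \<le> U' i j - U i j + normalize U i j * DT"
      using incr_nonneg[of i j] DT_nonneg by (simp add: abs_if)
  qed
  also have "(\<Sum>i\<in>UNIV. \<Sum>j\<in>UNIV. (U' i j - U i j) + normalize U i j * DT) = 2 * DT"
    using total_normalize[of U] T
    by (simp add: sum.distrib DT_def total_diff sum_distrib_right[symmetric] total_def[of "normalize U"])
  also have "2 * DT * (1 / total U - 1 / total U') \<le> 2 * total a * (1 / total U - 1 / total U')"
    using DT_le factor_nonneg by (intro mult_right_mono) auto
  finally show ?thesis .
qed

lemma norm1_centered_le:
  fixes d x a :: "'v::finite \<Rightarrow> 'v \<Rightarrow> real"
  assumes T: "T > 0" and x_nonneg: "\<And>i j. x i j \<ge> 0" and x_total: "total x = 1"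
    and d_le: "\<And>i j. \<bar>d i j\<bar> \<le> a i j"
  shows "norm1 (\<lambda>i j. (d i j - x i j * total d) / T) \<le> 2 * total a / T"
proof -
  have total_d_le: "\<bar>total d\<bar> \<le> total a" unfolding total_def
    by (rule order_trans[OF sum_abs] sum_mono order_trans[OF sum_abs] sum_mono d_le)+
  have "norm1 (\<lambda>i j. (d i j - x i j * total d) / T)
      = (\<Sum>i\<in>UNIV. \<Sum>j\<in>UNIV. \<bar>d i j - x i j * total d\<bar>) / T"
    unfolding norm1_def using T by (simp add: sum_divide_distrib)
  also have "\<dots> \<le> (\<Sum>i\<in>UNIV. \<Sum>j\<in>UNIV. a i j + x i j * total a) / T"
  proof (intro divide_right_mono sum_mono)
    fix i j
    have "\<bar>d i j - x i j * total d\<bar> \<le> \<bar>d i j\<bar> + x i j * \<bar>total d\<bar>"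
      using abs_triangle_ineq4[of "d i j" "x i j * total d"] x_nonneg[of i j] by (simp add: abs_mult)
    also have "\<dots> \<le> a i j + x i j * total a"
      using d_le[of i j] total_d_le x_nonneg[of i j] by (intro add_mono mult_left_mono) auto
    finally show "\<bar>d i j - x i j * total d\<bar> \<le> a i j + x i j * total a" .
  qed (use T in auto)
  also have "(\<Sum>i\<in>UNIV. \<Sum>j\<in>UNIV. a i j + x i j * total a) = 2 * total a"
    using x_total by (simp add: sum.distrib total_def sum_distrib_right[symmetric])
  finally show ?thesis .
qed

definition mutual_choice_prob ::
    "('v \<Rightarrow> 'v \<Rightarrow> bool) \<Rightarrow> ('v \<Rightarrow> 'v \<Rightarrow> real) \<Rightarrow> ('v::finite \<Rightarrow> 'v \<Rightarrow> real) \<Rightarrow> 'v \<Rightarrow> 'v \<Rightarrow> real"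
  where "mutual_choice_prob adj p U k l =
    (if adj k l then p k l * (U k l / rowsum U k) * (U l k / rowsum U l) else 0)"

lemma mutual_choice_prob_bounds:
  fixes U p :: "'v::finite \<Rightarrow> 'v \<Rightarrow> real"
  assumes U_nonneg: "\<And>i j. U i j \<ge> 0" and p_nonneg: "p k l \<ge> 0" and p_le_1: "p k l \<le> 1"
  shows "0 \<le> mutual_choice_prob adj p U k l" "mutual_choice_prob adj p U k l \<le> 1"
proof -
  have choice_bounds: "0 \<le> U i j / rowsum U i \<and> U i j / rowsum U i \<le> 1" for i j
  proof -
    have "U i j \<le> rowsum U i"
      unfolding rowsum_def by (rule member_le_sum) (use U_nonneg in auto)
    then show ?thesis using U_nonneg[of i j] by (auto simp: divide_le_eq_1)
  qed
  have "0 \<le> p k l * (U k l / rowsum U k) * (U l k / rowsum U l)"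
    using p_nonneg choice_bounds by (intro mult_nonneg_nonneg) auto
  then show "0 \<le> mutual_choice_prob adj p U k l" unfolding mutual_choice_prob_def by simp
  have "p k l * (U k l / rowsum U k) * (U l k / rowsum U l) \<le> 1"
    using p_nonneg p_le_1 choice_bounds by (intro mult_le_one mult_nonneg_nonneg) auto
  then show "mutual_choice_prob adj p U k l \<le> 1" unfolding mutual_choice_prob_def by simp
qed

lemma Ffun_normalize:
  fixes U a p :: "'v::finite \<Rightarrow> 'v \<Rightarrow> real"
  assumes T: "total U > 0" and U_nonneg: "\<And>i j. U i j \<ge> 0"
    and U_pos: "\<And>i j. U i j > 0 \<longleftrightarrow> adj i j" and U_sym: "\<And>i j. U i j = U j i"
  shows "Ffun a p (normalize U) i j = a i j * mutual_choice_prob adj p U i j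
     - normalize U i j * (\<Sum>k\<in>UNIV. \<Sum>l\<in>UNIV. a k l * mutual_choice_prob adj p U k l)"
proof -
  let ?x = "normalize U" and ?q = "mutual_choice_prob adj p U"
  have x_pos: "?x k l > 0 \<longleftrightarrow> adj k l" for k l
    using T U_pos[of k l] unfolding normalize_def by (simp add: zero_less_divide_iff)
  have x_zero: "?x k l = 0 \<longleftrightarrow> \<not> adj k l" for k l
    using T U_nonneg[of k l] U_pos[of k l] unfolding normalize_def by auto
  have summand: "a k l * p k l * (?x k l)^2 / (rowsum ?x k * rowsum ?x l) = a k l * ?q k l"
    if "adj k l" for k l
    using that T unfolding mutual_choice_prob_def rowsum_normalize normalize_def
    by (simp add: U_sym[of l k] power2_eq_square field_simps)
  have H: "Hfun a p ?x = (\<Sum>k\<in>UNIV. \<Sum>l\<in>UNIV. a k l * ?q k l)"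
  proof -
    have "Hfun a p ?x = (\<Sum>z\<in>{z\<in>UNIV. ?x (fst z) (snd z) > 0}.
        a (fst z) (snd z) * p (fst z) (snd z) * (?x (fst z) (snd z))^2
          / (rowsum ?x (fst z) * rowsum ?x (snd z)))"
      unfolding Hfun_def by (rule sum.cong) (auto simp: case_prod_beta)
    also have "\<dots> = (\<Sum>z\<in>UNIV. if ?x (fst z) (snd z) > 0 then
        a (fst z) (snd z) * p (fst z) (snd z) * (?x (fst z) (snd z))^2
          / (rowsum ?x (fst z) * rowsum ?x (snd z)) else 0)"
      by (rule sum.inter_filter) simp
    also have "\<dots> = (\<Sum>(k, l)\<in>UNIV \<times> UNIV. a k l * ?q k l)"
      by (rule sum.cong) (auto simp: x_pos summand mutual_choice_prob_def)
    finally show ?thesis by (simp add: sum.cartesian_product)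
  qed
  show ?thesis
  proof (cases "adj i j")
    case False
    then show ?thesis unfolding Ffun_def using x_zero by (simp add: mutual_choice_prob_def)
  next
    case True
    have "a i j * ?q i j = ?x i j * (if a i j * p i j = 0 then 0
        else a i j * p i j * ?x i j / (rowsum ?x i * rowsum ?x j))"
      using summand[OF True] by (auto simp: power2_eq_square field_simps)
    then show ?thesis unfolding Ffun_def H using x_zero[of i j] True by (simp add: right_diff_distrib)
  qed
qed

lemma sum_PiE_pinned_pair:
  fixes g :: "'a::finite \<Rightarrow> 'a \<Rightarrow> real"
  assumes "k \<in> N" "l \<in> N" "k \<noteq> l" and stochastic: "\<And>i. i \<in> N \<Longrightarrow> (\<Sum>y\<in>UNIV. g i y) = 1"
  shows "(\<Sum>c\<in>PiE N (\<lambda>m. if m = k then {l} else if m = l then {k} else UNIV). \<Prod>i\<in>N. g i (c i))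
    = g k l * g l k"
proof -
  let ?D = "\<lambda>m. if m = k then {l} else if m = l then {k} else UNIV"
  have "(\<Sum>c\<in>PiE N ?D. \<Prod>i\<in>N. g i (c i)) = (\<Prod>i\<in>N. \<Sum>y\<in>?D i. g i y)"
    by (rule prod_sum_PiE[symmetric]) auto
  also have "\<dots> = (\<Prod>i\<in>{k, l}. \<Sum>y\<in>?D i. g i y)"
    by (rule prod.mono_neutral_right) (use assms in auto)
  also have "\<dots> = g k l * g l k" using \<open>k \<noteq> l\<close> by simp
  finally show ?thesis .
qed

lemma indicator_vimage_sum:
  fixes f :: "'a \<Rightarrow> 'b"
  assumes "finite P"
  shows "indicator {x\<in>A. f x \<in> P} x = (\<Sum>z\<in>P. indicator {x\<in>A. f x = z} x :: real)"
  using assms by (auto simp: indicator_def sum.delta')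

lemma summable_telescoping_le:
  fixes r f :: "nat \<Rightarrow> real"
  assumes "decseq f" "\<And>m. 0 \<le> f m" "\<And>m. 0 \<le> r m" "0 \<le> c"
    and r_le: "\<And>m. r m \<le> c * (f m - f (Suc m))"
  shows "summable r" "suminf r \<le> c * f 0"
proof -
  obtain L where L: "f \<longlonglongrightarrow> L" using decseq_convergent assms(1,2) by metis
  have "L \<ge> 0" using L assms(2) by (simp add: LIMSEQ_le_const)
  have telescope: "(\<lambda>m. c * (f m - f (Suc m))) sums (c * (f 0 - L))"
    using sums_mult[OF telescope_sums'[OF L]] .
  show "summable r"
    by (rule summable_comparison_test'[OF sums_summable[OF telescope]]) (use assms in auto)
  then have "suminf r \<le> c * (f 0 - L)"
    using suminf_le[OF r_le _ sums_summable[OF telescope]] sums_unique[OF telescope] by simp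
  also have "\<dots> \<le> c * f 0" using \<open>L \<ge> 0\<close> \<open>0 \<le> c\<close> by (simp add: mult_left_mono)
  finally show "suminf r \<le> c * f 0" .
qed

context sigma_finite_subalgebra
begin

lemma real_cond_exp_sum_zero:
  assumes "finite I" "\<And>i. integrable M (f i)"
    and "\<And>i. i \<in> I \<Longrightarrow> AE x in M. real_cond_exp M F (f i) x = 0"
  shows "AE x in M. real_cond_exp M F (\<lambda>x. \<Sum>i\<in>I. f i x) x = 0"
proof -
  have "AE x in M. real_cond_exp M F (\<lambda>x. \<Sum>i\<in>I. f i x) x = (\<Sum>i\<in>I. real_cond_exp M F (f i) x)"
    using assms(2) by (rule real_cond_exp_sum)
  moreover have "AE x in M. \<forall>i\<in>I. real_cond_exp M F (f i) x = 0"
    using assms(1,3) by (rule AE_finite_allI)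
  ultimately show ?thesis by eventually_elim simp
qed

lemma real_cond_exp_bounded_mult_zero:
  assumes "finite_measure M"
    and g_meas: "g \<in> borel_measurable F" and g_bound: "\<And>x. x \<in> space M \<Longrightarrow> \<bar>g x\<bar> \<le> B"
    and h_meas: "h \<in> borel_measurable M" and h_bound: "\<And>x. x \<in> space M \<Longrightarrow> \<bar>h x\<bar> \<le> B'"
    and h_zero: "AE x in M. real_cond_exp M F h x = 0"
  shows "integrable M (\<lambda>x. g x * h x)" "AE x in M. real_cond_exp M F (\<lambda>x. g x * h x) x = 0"
proof -
  have g_meas_M: "g \<in> borel_measurable M" using measurable_from_subalg[OF subalg g_meas] .
  show int: "integrable M (\<lambda>x. g x * h x)"
  proof (rule finite_measure.integrable_const_bound[OF \<open>finite_measure M\<close>, where B="B * B'"])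
    show "AE x in M. norm (g x * h x) \<le> B * B'"
    proof (rule AE_I2)
      fix x assume x: "x \<in> space M"
      have "0 \<le> B" using g_bound[OF x] by linarith
      then show "norm (g x * h x) \<le> B * B'"
        using g_bound[OF x] h_bound[OF x] by (auto simp: abs_mult intro!: mult_mono)
    qed
  qed (use g_meas_M h_meas in measurable)
  have "AE x in M. real_cond_exp M F (\<lambda>x. g x * h x) x = g x * real_cond_exp M F h x"
    using g_meas h_meas int by (rule real_cond_exp_mult)
  with h_zero show "AE x in M. real_cond_exp M F (\<lambda>x. g x * h x) x = 0" by eventually_elim simp
qed

end

locale reinforcement_network =
  fixes adj :: "'v::finite \<Rightarrow> 'v \<Rightarrow> bool"
    and a :: "'v \<Rightarrow> 'v \<Rightarrow> real"
    and pW :: "'v set \<Rightarrow> real"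
    and v0 :: "'v \<Rightarrow> 'v \<Rightarrow> real"
    and M :: "'w measure"
    and F :: "nat \<Rightarrow> 'w measure"
    and V :: "nat \<Rightarrow> 'w \<Rightarrow> 'v \<Rightarrow> 'v \<Rightarrow> real"
    and C :: "nat \<Rightarrow> 'w \<Rightarrow> 'v \<Rightarrow> 'v"
    and W :: "nat \<Rightarrow> 'w \<Rightarrow> 'v set"
  assumes adj_sym: "\<And>i j. adj i j \<longleftrightarrow> adj j i"
    and adj_irrefl: "\<And>i. \<not> adj i i"
    and a_sym: "\<And>i j. a i j = a j i"
    and a_nonneg: "\<And>i j. a i j \<ge> 0"
    and pW_nonneg: "\<And>S. pW S \<ge> 0"
    and pW_sum: "(\<Sum>S\<in>UNIV. pW S) = 1"
    and some_pos: "\<exists>i j. a i j * pedge adj pW i j > 0"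
    and v0_sym: "\<And>i j. v0 i j = v0 j i"
    and v0_nonneg: "\<And>i j. v0 i j \<ge> 0"
    and v0_pos: "\<And>i j. v0 i j > 0 \<longleftrightarrow> adj i j"
    and M_prob: "prob_space M"
    and F_sub: "\<And>n. subalgebra M (F n)"
    and F_mono: "\<And>n. sets (F n) \<subseteq> sets (F (Suc n))"
    and V_meas: "\<And>n i j. (\<lambda>\<omega>. V n \<omega> i j) \<in> borel_measurable (F n)"
    and C_meas: "\<And>n i. (\<lambda>\<omega>. C n \<omega> i) \<in> measurable (F (Suc n)) (count_space UNIV)"
    and W_meas: "\<And>n. W n \<in> measurable (F (Suc n)) (count_space UNIV)"
    and V_init: "\<And>\<omega>. \<omega> \<in> space M \<Longrightarrow> V 0 \<omega> = v0"
    and V_step: "\<And>n \<omega> i j. \<omega> \<in> space M \<Longrightarrow>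
        V (Suc n) \<omega> i j = V n \<omega> i j +
          (if adj i j \<and> i \<in> W n \<omega> \<and> j \<in> W n \<omega> \<and> C n \<omega> i = j \<and> C n \<omega> j = i
           then a i j else 0)"
    and choice_law: "\<And>n c S. AE \<omega> in M.
        real_cond_exp M (F n)
          (indicator {\<omega>'\<in>space M. (\<forall>i. (\<exists>k. adj i k) \<longrightarrow> C n \<omega>' i = c i) \<and> W n \<omega>' = S}) \<omega>
        = (\<Prod>i\<in>{i. \<exists>k. adj i k}. V n \<omega> i (c i) / rowsum (V n \<omega>) i) * pW S"
begin

abbreviation p :: "'v \<Rightarrow> 'v \<Rightarrow> real" where "p \<equiv> pedge adj pW"

lemma p_nonneg: "p i j \<ge> 0"
  unfolding pedge_def using pW_nonneg by (simp add: sum_nonneg)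

lemma p_le_1: "p i j \<le> 1"
proof -
  have "(\<Sum>S\<in>{S. i \<in> S \<and> j \<in> S}. pW S) \<le> (\<Sum>S\<in>UNIV. pW S)"
    by (rule sum_mono2) (auto intro: pW_nonneg)
  then show ?thesis unfolding pedge_def using pW_sum by auto
qed

definition mutual_choice :: "nat \<Rightarrow> 'v \<Rightarrow> 'v \<Rightarrow> 'w set" where
  "mutual_choice n k l =
    {\<omega>\<in>space M. adj k l \<and> k \<in> W n \<omega> \<and> l \<in> W n \<omega> \<and> C n \<omega> k = l \<and> C n \<omega> l = k}"

lemma V_Suc: "\<omega> \<in> space M \<Longrightarrow> V (Suc n) \<omega> k l = V n \<omega> k l + a k l * indicator (mutual_choice n k l) \<omega>"
  using V_step[of \<omega> n k l] by (simp add: mutual_choice_def indicator_def)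

lemma V_le_V_Suc: "\<omega> \<in> space M \<Longrightarrow> V n \<omega> k l \<le> V (Suc n) \<omega> k l"
  using a_nonneg[of k l] by (simp add: V_Suc indicator_def)

lemma V_Suc_le: "\<omega> \<in> space M \<Longrightarrow> V (Suc n) \<omega> k l - V n \<omega> k l \<le> a k l"
  using a_nonneg[of k l] by (simp add: V_Suc indicator_def)

lemma v0_le_V:
  assumes "\<omega> \<in> space M" shows "v0 i j \<le> V n \<omega> i j"
proof (induction n)
  case 0
  show ?case using V_init[OF assms] by simp
next
  case (Suc n)
  then show ?case using V_le_V_Suc[OF assms, of n i j] by linarith
qed

lemma V_nonneg: "\<omega> \<in> space M \<Longrightarrow> V n \<omega> i j \<ge> 0"
  using v0_le_V v0_nonneg order_trans by blast

lemma V_eq_0: "\<omega> \<in> space M \<Longrightarrow> \<not> adj i j \<Longrightarrow> V n \<omega> i j = 0"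
proof (induction n)
  case 0
  then show ?case using V_init v0_pos[of i j] v0_nonneg[of i j] by simp
next
  case (Suc n)
  then show ?case using V_Suc[OF Suc.prems(1), of n i j] by (simp add: mutual_choice_def)
qed

lemma V_pos_iff: "\<omega> \<in> space M \<Longrightarrow> V n \<omega> i j > 0 \<longleftrightarrow> adj i j"
  using v0_le_V[of \<omega> i j n] v0_pos[of i j] V_eq_0[of \<omega> i j n] by force

lemma V_sym: "\<omega> \<in> space M \<Longrightarrow> V n \<omega> i j = V n \<omega> j i"
proof (induction n)
  case 0
  then show ?case using V_init v0_sym by simp
next
  case (Suc n)
  then show ?case using V_step[OF Suc.prems, of n i j] V_step[OF Suc.prems, of n j i]
    adj_sym[of i j] a_sym[of i j] by auto
qed

lemma V_le_rowsum: "\<omega> \<in> space M \<Longrightarrow> V n \<omega> i j \<le> rowsum (V n \<omega>) i"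
  unfolding rowsum_def by (rule member_le_sum) (auto intro: V_nonneg)

lemma rowsum_V_pos: "\<omega> \<in> space M \<Longrightarrow> adj i j \<Longrightarrow> rowsum (V n \<omega>) i > 0"
  using V_pos_iff V_le_rowsum by (meson less_le_trans)

lemma total_v0_pos: "total v0 > 0"
proof -
  obtain i j where "a i j * p i j > 0" using some_pos by blast
  then have "adj i j" unfolding pedge_def by (auto split: if_splits)
  then have "0 < v0 i j" using v0_pos by simp
  also have "v0 i j \<le> total v0"
    by (rule le_total) (rule v0_nonneg)
  finally show ?thesis .
qed

lemma total_v0_le: "\<omega> \<in> space M \<Longrightarrow> total v0 \<le> total (V n \<omega>)"
  unfolding total_def using v0_le_V by (intro sum_mono)

lemma total_V_pos: "\<omega> \<in> space M \<Longrightarrow> total (V n \<omega>) > 0"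
  using total_v0_le total_v0_pos by (meson less_le_trans)

lemma total_V_mono: "\<omega> \<in> space M \<Longrightarrow> total (V n \<omega>) \<le> total (V (Suc n) \<omega>)"
  unfolding total_def using V_le_V_Suc by (intro sum_mono)

lemma inverse_total_V_le: "\<omega> \<in> space M \<Longrightarrow> 1 / total (V n \<omega>) \<le> 1 / total v0"
  using total_v0_le total_v0_pos by (simp add: frac_le)

lemma normalize_V_nonneg: "\<omega> \<in> space M \<Longrightarrow> normalize (V n \<omega>) i j \<ge> 0"
  unfolding normalize_def using V_nonneg total_V_pos by (simp add: less_imp_le)

lemma normalize_V_le_1: "\<omega> \<in> space M \<Longrightarrow> normalize (V n \<omega>) i j \<le> 1"
  unfolding normalize_def using le_total[of "V n \<omega>"] V_nonneg total_V_pos by simp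

definition noise :: "nat \<Rightarrow> 'w \<Rightarrow> 'v \<Rightarrow> 'v \<Rightarrow> real" where
  "noise n \<omega> k l = a k l * (indicator (mutual_choice n k l) \<omega> - mutual_choice_prob adj p (V n \<omega>) k l)"

definition eta :: "nat \<Rightarrow> 'w \<Rightarrow> 'v \<Rightarrow> 'v \<Rightarrow> real" where
  "eta n \<omega> i j = (noise n \<omega> i j - normalize (V n \<omega>) i j * total (noise n \<omega>)) / total (V n \<omega>)"

lemma mutual_choice_prob_V_bounds:
  assumes "\<omega> \<in> space M"
  shows "0 \<le> mutual_choice_prob adj p (V n \<omega>) k l" "mutual_choice_prob adj p (V n \<omega>) k l \<le> 1"
  using mutual_choice_prob_bounds[of "V n \<omega>" p k l adj] V_nonneg[OF assms] p_nonneg p_le_1 by auto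

lemma abs_noise_le: "\<omega> \<in> space M \<Longrightarrow> \<bar>noise n \<omega> k l\<bar> \<le> a k l"
proof -
  assume \<omega>: "\<omega> \<in> space M"
  have "\<bar>indicator (mutual_choice n k l) \<omega> - mutual_choice_prob adj p (V n \<omega>) k l\<bar> \<le> (1::real)"
    using mutual_choice_prob_V_bounds[OF \<omega>, of n k l] by (simp add: indicator_def)
  then show ?thesis
    unfolding noise_def abs_mult using a_nonneg[of k l] by (simp add: mult_left_le)
qed

lemma abs_total_noise_le: "\<omega> \<in> space M \<Longrightarrow> \<bar>total (noise n \<omega>)\<bar> \<le> total a"
  unfolding total_def
  by (rule order_trans[OF sum_abs] sum_mono order_trans[OF sum_abs] sum_mono abs_noise_le)+

lemma norm1_eta_le:
  assumes \<omega>: "\<omega> \<in> space M" shows "norm1 (eta n \<omega>) \<le> 2 * total a / total (V n \<omega>)"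
  unfolding eta_def[abs_def] using total_V_pos[OF \<omega>, of n]
  by (intro norm1_centered_le normalize_V_nonneg[OF \<omega>] abs_noise_le[OF \<omega>] total_normalize) auto

lemma normalize_V_Suc:
  assumes \<omega>: "\<omega> \<in> space M"
  shows "normalize (V (Suc n) \<omega>) i j - normalize (V n \<omega>) i j
    = Ffun a p (normalize (V n \<omega>)) i j / total (V n \<omega>) + eta n \<omega> i j
      + Rtilde (V n \<omega>) (V (Suc n) \<omega>) i j"
proof -
  let ?x = "normalize (V n \<omega>)" and ?T = "total (V n \<omega>)"
  let ?q = "mutual_choice_prob adj p (V n \<omega>)" and ?I = "\<lambda>k l. indicator (mutual_choice n k l) \<omega> :: real"
  have F: "Ffun a p ?x i j = a i j * ?q i j - ?x i j * (\<Sum>k\<in>UNIV. \<Sum>l\<in>UNIV. a k l * ?q k l)"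
    by (rule Ffun_normalize) (use total_V_pos V_nonneg V_pos_iff V_sym \<omega> in auto)
  have total_incr: "total (V (Suc n) \<omega>) - ?T = (\<Sum>k\<in>UNIV. \<Sum>l\<in>UNIV. a k l * ?I k l)"
    unfolding total_diff using V_Suc[OF \<omega>] by simp
  have total_noise: "total (noise n \<omega>)
      = (\<Sum>k\<in>UNIV. \<Sum>l\<in>UNIV. a k l * ?I k l) - (\<Sum>k\<in>UNIV. \<Sum>l\<in>UNIV. a k l * ?q k l)"
    unfolding total_def noise_def by (simp add: right_diff_distrib sum_subtractf)
  have "normalize (V (Suc n) \<omega>) i j - ?x i j =
     (V (Suc n) \<omega> i j - V n \<omega> i j - ?x i j * (total (V (Suc n) \<omega>) - ?T)) / ?T
     + Rtilde (V n \<omega>) (V (Suc n) \<omega>) i j"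
    using total_V_pos[OF \<omega>, of n] total_V_pos[OF \<omega>, of "Suc n"]
    by (intro normalize_increment) auto
  also have "\<dots> = Ffun a p ?x i j / ?T + eta n \<omega> i j + Rtilde (V n \<omega>) (V (Suc n) \<omega>) i j"
    unfolding eta_def F total_incr total_noise V_Suc[OF \<omega>] noise_def
    by (simp add: add_divide_distrib[symmetric] algebra_simps)
  finally show ?thesis .
qed

lemma summable_norm1_Rtilde:
  assumes \<omega>: "\<omega> \<in> space M"
  shows "summable (\<lambda>m. norm1 (Rtilde (V (k + m) \<omega>) (V (Suc (k + m)) \<omega>)))"
    "(\<Sum>m. norm1 (Rtilde (V (k + m) \<omega>) (V (Suc (k + m)) \<omega>))) \<le> 2 * total a / total (V k \<omega>)"
proof -
  let ?f = "\<lambda>m. 1 / total (V (k + m) \<omega>)"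
  let ?r = "\<lambda>m. norm1 (Rtilde (V (k + m) \<omega>) (V (Suc (k + m)) \<omega>))"
  have "decseq ?f"
    using total_V_mono[OF \<omega>] total_V_pos[OF \<omega>] by (intro decseq_SucI) (simp add: frac_le)
  moreover have "?r m \<le> 2 * total a * (?f m - ?f (Suc m))" for m
    using norm1_Rtilde_le[OF total_V_pos V_nonneg V_le_V_Suc V_Suc_le, OF \<omega> \<omega> \<omega> \<omega>] by simp
  moreover have "0 \<le> total a" unfolding total_def using a_nonneg by (simp add: sum_nonneg)
  moreover have "0 \<le> ?f m" for m using total_V_pos[OF \<omega>, of "k + m"] by simp
  ultimately show "summable ?r" "suminf ?r \<le> 2 * total a / total (V k \<omega>)"
    using summable_telescoping_le[of ?f ?r "2 * total a"] norm1_nonneg by auto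
qed

lemma space_F: "space (F n) = space M"
  using F_sub[of n] unfolding subalgebra_def by simp

lemma subalgebra_F_Suc: "subalgebra (F (Suc n)) (F n)"
  unfolding subalgebra_def using F_mono[of n] space_F by simp

lemma finite_measure_M: "finite_measure M"
  using M_prob by (simp add: prob_space_def)

lemma sigma_finite_subalgebra_F: "sigma_finite_subalgebra M (F n)"
  by (rule finite_measure_subalgebra_is_sigma_finite)
     (use finite_measure_M F_sub in \<open>auto simp: finite_measure_subalgebra_def finite_measure_subalgebra_axioms_def\<close>)

lemma measurable_F_M: "f \<in> borel_measurable (F n) \<Longrightarrow> f \<in> borel_measurable M"
  by (rule measurable_from_subalg[OF F_sub])

lemma measurable_F_Suc: "f \<in> borel_measurable (F n) \<Longrightarrow> f \<in> borel_measurable (F (Suc n))"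
  by (rule measurable_from_subalg[OF subalgebra_F_Suc])

lemma measurable_total_V [measurable]: "(\<lambda>\<omega>. total (V n \<omega>)) \<in> borel_measurable (F n)"
  using V_meas[measurable] unfolding total_def by measurable

lemma measurable_normalize_V [measurable]: "(\<lambda>\<omega>. normalize (V n \<omega>) k l) \<in> borel_measurable (F n)"
  using V_meas[measurable] unfolding normalize_def total_def by measurable

lemma measurable_mutual_choice_prob [measurable]:
  "(\<lambda>\<omega>. mutual_choice_prob adj p (V n \<omega>) k l) \<in> borel_measurable (F n)"
  using V_meas[measurable] unfolding mutual_choice_prob_def rowsum_def by measurable

lemma choice_event_sets:
  "{\<omega>\<in>space M. (\<forall>i. (\<exists>k. adj i k) \<longrightarrow> C n \<omega> i = c i) \<and> W n \<omega> = S} \<in> sets (F (Suc n))"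
  using W_meas[measurable] C_meas[measurable] unfolding space_F[of "Suc n", symmetric] by measurable

lemma mutual_choice_sets: "mutual_choice n k l \<in> sets (F (Suc n))"
  using W_meas[measurable] C_meas[measurable]
  unfolding mutual_choice_def space_F[of "Suc n", symmetric] by measurable

lemma measurable_noise: "(\<lambda>\<omega>. noise n \<omega> k l) \<in> borel_measurable (F (Suc n))"
  using measurable_F_Suc[OF measurable_mutual_choice_prob] mutual_choice_sets
  unfolding noise_def by measurable

lemma measurable_eta: "(\<lambda>\<omega>. eta n \<omega> i j) \<in> borel_measurable (F (Suc n))"
  using measurable_F_Suc[OF measurable_total_V] measurable_F_Suc[OF measurable_normalize_V]
    measurable_noise[measurable]
  unfolding eta_def total_def[of "noise n _"] by measurable

definition choice_event :: "nat \<Rightarrow> ('v \<Rightarrow> 'v) \<times> 'v set \<Rightarrow> 'w set" where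
  "choice_event n z = {\<omega>\<in>space M. (\<forall>i. (\<exists>k. adj i k) \<longrightarrow> C n \<omega> i = fst z i) \<and> W n \<omega> = snd z}"

definition meeting_profiles :: "'v \<Rightarrow> 'v \<Rightarrow> (('v \<Rightarrow> 'v) \<times> 'v set) set" where
  "meeting_profiles k l = PiE {i. \<exists>j. adj i j} (\<lambda>m. if m = k then {l} else if m = l then {k} else UNIV)
    \<times> {S. k \<in> S \<and> l \<in> S}"

lemma integrable_choice_event: "integrable M (indicator (choice_event n z) :: 'w \<Rightarrow> real)"
proof -
  have "choice_event n z \<in> sets M"
    using choice_event_sets[of n "fst z" "snd z"] F_sub[of "Suc n"]
    unfolding choice_event_def subalgebra_def by blast
  then show ?thesis using finite_measure.emeasure_finite[OF finite_measure_M] by (auto simp: less_top)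
qed

lemma indicator_mutual_choice:
  assumes "adj k l"
  shows "indicator (mutual_choice n k l)
    = (\<lambda>\<omega>. \<Sum>z\<in>meeting_profiles k l. indicator (choice_event n z) \<omega> :: real)"
proof -
  define N where "N = {i. \<exists>j. adj i j}"
  define profile where "profile \<omega> = (restrict (C n \<omega>) N, W n \<omega>)" for \<omega>
  have "k \<noteq> l" "k \<in> N" "l \<in> N" using assms adj_irrefl adj_sym[of k l] unfolding N_def by auto
  then have "mutual_choice n k l = {\<omega>\<in>space M. profile \<omega> \<in> meeting_profiles k l}"
    using assms unfolding mutual_choice_def profile_def meeting_profiles_def N_def
    by (auto simp: restrict_PiE_iff Pi_iff)
  moreover have "choice_event n z = {\<omega>\<in>space M. profile \<omega> = z}" if "z \<in> meeting_profiles k l" for z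
    using that unfolding choice_event_def profile_def meeting_profiles_def N_def
    by (auto simp: fun_eq_iff PiE_def extensional_def)
  ultimately show ?thesis by (simp add: fun_eq_iff indicator_vimage_sum meeting_profiles_def)
qed

text \<open>Vertices other than \<open>k\<close> and \<open>l\<close> choose freely, so each contributes a factor \<open>1\<close>.\<close>
lemma sum_meeting_profiles:
  assumes \<omega>: "\<omega> \<in> space M" and "adj k l"
  shows "(\<Sum>z\<in>meeting_profiles k l. (\<Prod>i\<in>{i. \<exists>j. adj i j}. V n \<omega> i (fst z i) / rowsum (V n \<omega>) i)
      * pW (snd z)) = mutual_choice_prob adj p (V n \<omega>) k l"
proof -
  define N where "N = {i. \<exists>j. adj i j}"
  define D where "D = (\<lambda>m. if m = k then {l} else if m = l then {k} else UNIV)"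
  let ?g = "\<lambda>i y. V n \<omega> i y / rowsum (V n \<omega>) i"
  have "k \<noteq> l" "k \<in> N" "l \<in> N" using assms adj_irrefl adj_sym[of k l] unfolding N_def by auto
  have "(\<Sum>c\<in>PiE N D. \<Prod>i\<in>N. ?g i (c i)) = ?g k l * ?g l k"
    unfolding D_def using \<open>k \<in> N\<close> \<open>l \<in> N\<close> \<open>k \<noteq> l\<close>
  proof (rule sum_PiE_pinned_pair)
    fix i assume "i \<in> N"
    then obtain j where "adj i j" unfolding N_def by auto
    then show "(\<Sum>y\<in>UNIV. ?g i y) = 1"
      using rowsum_V_pos[OF \<omega>, of i j n] by (simp add: sum_divide_distrib[symmetric] rowsum_def)
  qed
  moreover have "(\<Sum>S\<in>{S. k \<in> S \<and> l \<in> S}. pW S) = p k l" using assms by (simp add: pedge_def)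
  moreover have "(\<Sum>z\<in>meeting_profiles k l. (\<Prod>i\<in>N. ?g i (fst z i)) * pW (snd z))
      = (\<Sum>c\<in>PiE N D. \<Prod>i\<in>N. ?g i (c i)) * (\<Sum>S\<in>{S. k \<in> S \<and> l \<in> S}. pW S)"
    unfolding meeting_profiles_def N_def D_def
    by (simp add: sum_product sum.cartesian_product case_prod_beta)
  ultimately show ?thesis using assms by (simp add: mutual_choice_prob_def N_def)
qed

lemma cond_prob_mutual_choice:
  "AE \<omega> in M. real_cond_exp M (F n) (indicator (mutual_choice n k l)) \<omega>
    = mutual_choice_prob adj p (V n \<omega>) k l"
proof (cases "adj k l")
  case False
  then have "indicator (mutual_choice n k l) = (\<lambda>_. 0::real)"
    by (simp add: mutual_choice_def fun_eq_iff)
  then show ?thesis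
    using sigma_finite_subalgebra.real_cond_exp_F_meas[OF sigma_finite_subalgebra_F, of "\<lambda>_. 0" n]
    using False by (simp add: mutual_choice_prob_def)
next
  case True
  have "AE \<omega> in M. real_cond_exp M (F n) (indicator (mutual_choice n k l)) \<omega>
      = (\<Sum>z\<in>meeting_profiles k l. real_cond_exp M (F n) (indicator (choice_event n z)) \<omega>)"
    unfolding indicator_mutual_choice[OF True]
    by (rule sigma_finite_subalgebra.real_cond_exp_sum[OF sigma_finite_subalgebra_F integrable_choice_event])
  moreover have "AE \<omega> in M. \<forall>z\<in>meeting_profiles k l.
      real_cond_exp M (F n) (indicator (choice_event n z)) \<omega>
      = (\<Prod>i\<in>{i. \<exists>j. adj i j}. V n \<omega> i (fst z i) / rowsum (V n \<omega>) i) * pW (snd z)"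
    by (rule AE_finite_allI) (auto simp: choice_event_def choice_law)
  ultimately show ?thesis
    using AE_space by eventually_elim (simp add: sum_meeting_profiles[OF _ True])
qed

lemma measurable_noise_M: "(\<lambda>\<omega>. noise n \<omega> k l) \<in> borel_measurable M"
  using measurable_noise by (rule measurable_F_M)

lemma integrable_noise: "integrable M (\<lambda>\<omega>. noise n \<omega> k l)"
  by (rule finite_measure.integrable_const_bound[OF finite_measure_M, where B="a k l"])
     (use abs_noise_le measurable_noise_M in \<open>auto intro!: AE_I2\<close>)

lemma cond_exp_noise: "AE \<omega> in M. real_cond_exp M (F n) (\<lambda>\<omega>. noise n \<omega> k l) \<omega> = 0"
proof -
  interpret sigma_finite_subalgebra M "F n" by (rule sigma_finite_subalgebra_F)
  let ?q = "\<lambda>\<omega>. mutual_choice_prob adj p (V n \<omega>) k l"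
  have integrable_q: "integrable M ?q"
    by (rule finite_measure.integrable_const_bound[OF finite_measure_M, where B=1])
       (use mutual_choice_prob_V_bounds measurable_F_M[OF measurable_mutual_choice_prob] in
         \<open>auto intro!: AE_I2\<close>)
  have integrable_I: "integrable M (indicator (mutual_choice n k l) :: 'w \<Rightarrow> real)"
    using mutual_choice_sets[of n k l] F_sub[of "Suc n"]
      finite_measure.emeasure_finite[OF finite_measure_M, of "mutual_choice n k l"]
    unfolding subalgebra_def by (auto simp: less_top)
  have "AE \<omega> in M. real_cond_exp M (F n) (\<lambda>\<omega>. noise n \<omega> k l) \<omega>
      = a k l * real_cond_exp M (F n) (\<lambda>\<omega>. indicator (mutual_choice n k l) \<omega> - ?q \<omega>) \<omega>"
    unfolding noise_def using integrable_I integrable_q by (intro real_cond_exp_cmult) auto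
  moreover have "AE \<omega> in M. real_cond_exp M (F n) (\<lambda>\<omega>. indicator (mutual_choice n k l) \<omega> - ?q \<omega>) \<omega>
      = real_cond_exp M (F n) (indicator (mutual_choice n k l)) \<omega> - real_cond_exp M (F n) ?q \<omega>"
    using real_cond_exp_diff[OF integrable_I integrable_q] by simp
  moreover have "AE \<omega> in M. real_cond_exp M (F n) ?q \<omega> = ?q \<omega>"
    using integrable_q measurable_mutual_choice_prob by (rule real_cond_exp_F_meas)
  ultimately show ?thesis using cond_prob_mutual_choice[of n k l] by eventually_elim simp
qed

lemma cond_exp_total_noise: "AE \<omega> in M. real_cond_exp M (F n) (\<lambda>\<omega>. total (noise n \<omega>)) \<omega> = 0"
  unfolding total_def
  using sigma_finite_subalgebra_F integrable_noise cond_exp_noise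
  by (intro sigma_finite_subalgebra.real_cond_exp_sum_zero) auto

lemma eta_martingale_increment:
  "integrable M (\<lambda>\<omega>. eta n \<omega> i j)" "AE \<omega> in M. real_cond_exp M (F n) (\<lambda>\<omega>. eta n \<omega> i j) \<omega> = 0"
proof -
  interpret sigma_finite_subalgebra M "F n" by (rule sigma_finite_subalgebra_F)
  have eta_split: "(\<lambda>\<omega>. eta n \<omega> i j) = (\<lambda>\<omega>. 1 / total (V n \<omega>) * noise n \<omega> i j
      + - normalize (V n \<omega>) i j / total (V n \<omega>) * total (noise n \<omega>))"
    unfolding eta_def by (simp add: fun_eq_iff diff_divide_distrib)
  have bound_first: "\<bar>1 / total (V n \<omega>)\<bar> \<le> 1 / total v0" if "\<omega> \<in> space M" for \<omega>
    using inverse_total_V_le[OF that] total_V_pos[OF that, of n] by simp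
  have bound_second: "\<bar>- normalize (V n \<omega>) i j / total (V n \<omega>)\<bar> \<le> 1 / total v0"
    if "\<omega> \<in> space M" for \<omega>
  proof -
    have "normalize (V n \<omega>) i j * (1 / total (V n \<omega>)) \<le> 1 * (1 / total v0)"
      using normalize_V_le_1[OF that] inverse_total_V_le[OF that] total_V_pos[OF that, of n]
      by (intro mult_mono) auto
    then show ?thesis using normalize_V_nonneg[OF that, of n i j] total_V_pos[OF that, of n] by simp
  qed
  have measurable_total_noise: "(\<lambda>\<omega>. total (noise n \<omega>)) \<in> borel_measurable M"
    unfolding total_def using measurable_noise_M by measurable
  have first: "integrable M (\<lambda>\<omega>. 1 / total (V n \<omega>) * noise n \<omega> i j)"
    "AE \<omega> in M. real_cond_exp M (F n) (\<lambda>\<omega>. 1 / total (V n \<omega>) * noise n \<omega> i j) \<omega> = 0"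
    using real_cond_exp_bounded_mult_zero[OF finite_measure_M _ bound_first measurable_noise_M
        abs_noise_le cond_exp_noise]
    by auto
  have second: "integrable M (\<lambda>\<omega>. - normalize (V n \<omega>) i j / total (V n \<omega>) * total (noise n \<omega>))"
    "AE \<omega> in M. real_cond_exp M (F n)
       (\<lambda>\<omega>. - normalize (V n \<omega>) i j / total (V n \<omega>) * total (noise n \<omega>)) \<omega> = 0"
    using real_cond_exp_bounded_mult_zero[OF finite_measure_M _ bound_second measurable_total_noise
        abs_total_noise_le cond_exp_total_noise]
    by auto
  show "integrable M (\<lambda>\<omega>. eta n \<omega> i j)" unfolding eta_split using first(1) second(1) by simp
  show "AE \<omega> in M. real_cond_exp M (F n) (\<lambda>\<omega>. eta n \<omega> i j) \<omega> = 0"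
    using real_cond_exp_add[OF first(1) second(1)] first(2) second(2)
    unfolding eta_split by eventually_elim simp
qed

end

theorem lemma1:
  fixes adj :: "'v::finite \<Rightarrow> 'v \<Rightarrow> bool"
    and a :: "'v \<Rightarrow> 'v \<Rightarrow> real"
    and pW :: "'v set \<Rightarrow> real"
    and v0 :: "'v \<Rightarrow> 'v \<Rightarrow> real"
    and M :: "'w measure"
    and F :: "nat \<Rightarrow> 'w measure"
    and V :: "nat \<Rightarrow> 'w \<Rightarrow> 'v \<Rightarrow> 'v \<Rightarrow> real"
    and C :: "nat \<Rightarrow> 'w \<Rightarrow> 'v \<Rightarrow> 'v"
    and W :: "nat \<Rightarrow> 'w \<Rightarrow> 'v set"
  assumes adj_sym: "\<And>i j. adj i j \<longleftrightarrow> adj j i"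
    and adj_irrefl: "\<And>i. \<not> adj i i"
    and a_sym: "\<And>i j. a i j = a j i"
    and a_nonneg: "\<And>i j. a i j \<ge> 0"
    and a_adj: "\<And>i j. a i j > 0 \<Longrightarrow> adj i j"
    and pW_nonneg: "\<And>S. pW S \<ge> 0"
    and pW_sum: "(\<Sum>S\<in>UNIV. pW S) = 1"
    and some_pos: "\<exists>i j. a i j * pedge adj pW i j > 0"
    and v0_sym: "\<And>i j. v0 i j = v0 j i"
    and v0_nonneg: "\<And>i j. v0 i j \<ge> 0"
    and v0_pos: "\<And>i j. v0 i j > 0 \<longleftrightarrow> adj i j"
    and M_prob: "prob_space M"
    and F_sub: "\<And>n. subalgebra M (F n)"
    and F_mono: "\<And>n. sets (F n) \<subseteq> sets (F (Suc n))"
    and V_meas: "\<And>n i j. (\<lambda>\<omega>. V n \<omega> i j) \<in> borel_measurable (F n)"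
    and C_meas: "\<And>n i. (\<lambda>\<omega>. C n \<omega> i) \<in> measurable (F (Suc n)) (count_space UNIV)"
    and W_meas: "\<And>n. W n \<in> measurable (F (Suc n)) (count_space UNIV)"
    and V_init: "\<And>\<omega>. \<omega> \<in> space M \<Longrightarrow> V 0 \<omega> = v0"
    and V_step: "\<And>n \<omega> i j. \<omega> \<in> space M \<Longrightarrow>
        V (Suc n) \<omega> i j = V n \<omega> i j +
          (if adj i j \<and> i \<in> W n \<omega> \<and> j \<in> W n \<omega> \<and> C n \<omega> i = j \<and> C n \<omega> j = i
           then a i j else 0)"
    and choice_law: "\<And>n c S. AE \<omega> in M.
        real_cond_exp M (F n)
          (indicator {\<omega>'\<in>space M. (\<forall>i. (\<exists>k. adj i k) \<longrightarrow> C n \<omega>' i = c i) \<and> W n \<omega>' = S}) \<omega>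
        = (\<Prod>i\<in>{i. \<exists>k. adj i k}. V n \<omega> i (c i) / rowsum (V n \<omega>) i) * pW S"
  shows "\<exists>\<eta> :: nat \<Rightarrow> 'w \<Rightarrow> 'v \<Rightarrow> 'v \<Rightarrow> real.
      (\<forall>n i j. (\<lambda>\<omega>. \<eta> (Suc n) \<omega> i j) \<in> borel_measurable (F (Suc n))) \<and>
      (\<forall>n i j. integrable M (\<lambda>\<omega>. \<eta> (Suc n) \<omega> i j)) \<and>
      (\<forall>n i j. AE \<omega> in M. real_cond_exp M (F n) (\<lambda>\<omega>'. \<eta> (Suc n) \<omega>' i j) \<omega> = 0) \<and>
      (\<forall>n \<omega> i j. \<omega> \<in> space M \<longrightarrow>
          normalize (V (Suc n) \<omega>) i j - normalize (V n \<omega>) i j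
          = Ffun a (pedge adj pW) (normalize (V n \<omega>)) i j / total (V n \<omega>)
            + \<eta> (Suc n) \<omega> i j + Rtilde (V n \<omega>) (V (Suc n) \<omega>) i j) \<and>
      (\<forall>n \<omega>. \<omega> \<in> space M \<longrightarrow>
          norm1 (\<eta> (Suc n) \<omega>) \<le> 2 * (\<Sum>i\<in>UNIV. \<Sum>j\<in>UNIV. a i j) / total (V n \<omega>)) \<and>
      (\<forall>k \<omega>. \<omega> \<in> space M \<longrightarrow>
          summable (\<lambda>m. norm1 (Rtilde (V (k + m) \<omega>) (V (Suc (k + m)) \<omega>))) \<and>
          (\<Sum>m. norm1 (Rtilde (V (k + m) \<omega>) (V (Suc (k + m)) \<omega>)))
            \<le> 2 * (\<Sum>i\<in>UNIV. \<Sum>j\<in>UNIV. a i j) / total (V k \<omega>))"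
proof -
  interpret reinforcement_network adj a pW v0 M F V C W
    by (rule reinforcement_network.intro) (fact assms)+
  have "(\<Sum>i\<in>UNIV. \<Sum>j\<in>UNIV. a i j) = total a" by (simp add: total_def)
  then show ?thesis
    using measurable_eta eta_martingale_increment normalize_V_Suc norm1_eta_le summable_norm1_Rtilde
    by (intro exI[of _ "\<lambda>m. eta (m - 1)"]) simp
qed

end
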